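(* Let $\mathcal{F}$ satisfy the standard conditions and be closed under the minimizer operation. Let $\alpha_0\neq0,\alpha_1,\dots,\alpha_k\in\mathbb{R}_{\mathcal{F}}$. Then every real root of $P(X)=\alpha_0X^k+\alpha_1X^{k-1}+\cdots+\alpha_{k-1}X+\alpha_k$ belongs to $\mathbb{R}_{\mathcal{F}}$.
   Context: $\mathbb{N}=\{0,1,2,\dots\}$. $\mathcal{F}$ is a set of functions $\mathbb{N}^n\to\mathbb{N}$; it satisfies the standard conditions if it contains the zero function, the successor, all projections $P^n_i$, addition, multiplication and modified subtraction $x\dot- y=\max(x-y,0)$, and is closed under composition. For $f:\mathbb{N}^{k+1}\to\mathbb{N}$ the minimizer $\mu f:\mathbb{N}^{k+1}\to\mathbb{N}$ is $\mu f(x_1,\dots,x_k,x_{k+1})=\min\{j: f(x_1,\dots,x_k,j)=0\ \text{or}\ j=x_{k+1}\}$; $\mathcal{F}$ is closed under the minimizer operation if $f\in\mathcal{F}\Rightarrow\mu f\in\mathcal{F}$. An $\mathcal{F}$-sequence is $A:\mathbb{N}\to\mathbb{Q}$, $A(x)=\frac{f(x)-g(x)}{h(x)+1}$ with $f,g,h\in\mathcal{F}$. $\alpha\in\mathbb{R}$ is $\mathcal{F}$-computable if some $\mathcal{F}$-sequence $A$ satisfies $|A(x)-\alpha|\le\frac1{x+1}$ for all $x$; $\mathbb{R}_{\mathcal{F}}$ is the set of $\mathcal{F}$-computable reals. *)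

theory Defs
  imports Complex_Main
begin

text \<open>A class of number-theoretic functions is modelled as a family F indexed by arity:
  F n is a set of functions on argument lists; only their values on lists of length n matter.\<close>

type_synonym fclass = "nat \<Rightarrow> (nat list \<Rightarrow> nat) set"

definition fmem :: "fclass \<Rightarrow> nat \<Rightarrow> (nat list \<Rightarrow> nat) \<Rightarrow> bool" where
  "fmem F n f \<longleftrightarrow> (\<exists>g\<in>F n. \<forall>xs. length xs = n \<longrightarrow> g xs = f xs)"

definition standard_conditions :: "fclass \<Rightarrow> bool" where
  "standard_conditions F \<longleftrightarrow>
     fmem F 1 (\<lambda>xs. 0) \<and>
     fmem F 1 (\<lambda>xs. Suc (xs ! 0)) \<and>
     (\<forall>n i. i < n \<longrightarrow> fmem F n (\<lambda>xs. xs ! i)) \<and>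
     fmem F 2 (\<lambda>xs. xs ! 0 + xs ! 1) \<and>
     fmem F 2 (\<lambda>xs. xs ! 0 * xs ! 1) \<and>
     fmem F 2 (\<lambda>xs. xs ! 0 - xs ! 1) \<and>
     (\<forall>m n f gs. fmem F m f \<longrightarrow> length gs = m \<longrightarrow> (\<forall>g\<in>set gs. fmem F n g) \<longrightarrow>
        fmem F n (\<lambda>xs. f (map (\<lambda>g. g xs) gs)))"

definition minimizer :: "(nat list \<Rightarrow> nat) \<Rightarrow> nat list \<Rightarrow> nat" where
  "minimizer f xs = (LEAST j. f (butlast xs @ [j]) = 0 \<or> j = last xs)"

definition closed_minimizer :: "fclass \<Rightarrow> bool" where
  "closed_minimizer F \<longleftrightarrow>
     (\<forall>k f. fmem F (Suc k) f \<longrightarrow> fmem F (Suc k) (minimizer f))"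

definition F_sequence :: "fclass \<Rightarrow> (nat \<Rightarrow> rat) \<Rightarrow> bool" where
  "F_sequence F A \<longleftrightarrow> (\<exists>f g h. fmem F 1 f \<and> fmem F 1 g \<and> fmem F 1 h \<and>
     (\<forall>x. A x = (of_nat (f [x]) - of_nat (g [x])) / (of_nat (h [x]) + 1)))"

definition F_computable :: "fclass \<Rightarrow> real \<Rightarrow> bool" where
  "F_computable F \<alpha> \<longleftrightarrow> (\<exists>A. F_sequence F A \<and>
     (\<forall>x. \<bar>real_of_rat (A x) - \<alpha>\<bar> \<le> 1 / (real x + 1)))"

end

theory Submission
  imports Defs "HOL-Computational_Algebra.Polynomial"
begin

text \<open>Let m be the multiplicity of the root x. Near x, the polynomial P is squeezed between
  c |y - x|^m and C |y - x|. To approximate x within 1/(n+1), scan the grid of mesh 1/(D s) in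
  the cell of length 1/D containing x, where s grows like (n+1)^m, and let the bounded minimizer
  return the first grid point y at which a copy of P whose coefficients are accurate to 1/(s+1)
  has absolute value at most 1/K, with K also growing like (n+1)^m. After clearing denominators
  this test is the sign of an integer expression in members of F, so the search stays inside F.
  The grid point nearest to x passes the test by the upper bound, and every point passing it has
  c |y - x|^m <= 2/K, hence |y - x| <= 1/(n+1).\<close>

section \<open>A polynomial near a root\<close>

lemma poly_descending_coeffs:
  fixes \<alpha> :: "nat \<Rightarrow> 'a::comm_ring_1"
  assumes "\<alpha> 0 \<noteq> 0"
  obtains p where "p \<noteq> 0" "\<And>y. poly p y = (\<Sum>i\<le>k. \<alpha> i * y ^ (k - i))"
proof
  define p where "p = (\<Sum>i\<le>k. monom (\<alpha> i) (k - i))"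
  show "poly p y = (\<Sum>i\<le>k. \<alpha> i * y ^ (k - i))" for y
    unfolding p_def by (simp add: poly_sum poly_monom)
  have "coeff p k = (\<Sum>i\<le>k. if i = 0 then \<alpha> i else 0)"
    unfolding p_def coeff_sum coeff_monom by (intro sum.cong) auto
  then show "p \<noteq> 0"
    using assms by auto
qed

lemma poly_lower_bound_near_root:
  fixes p :: "real poly"
  assumes "p \<noteq> 0" "poly p x = 0"
  obtains m c \<delta> where "0 < m" "0 < c" "0 < \<delta>" "\<delta> \<le> 1"
    "\<And>y. \<bar>y - x\<bar> \<le> \<delta> \<Longrightarrow> c * \<bar>y - x\<bar> ^ m \<le> \<bar>poly p y\<bar>"
proof -
  define m where "m = order x p"
  obtain q where pq: "p = [:- x, 1:] ^ m * q" and "\<not> [:- x, 1:] dvd q"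
    using order_decomp[OF assms(1)] unfolding m_def by blast
  then have "poly q x \<noteq> 0"
    by (simp add: poly_eq_0_iff_dvd)
  have "0 < m"
    using assms order_root[of p x] unfolding m_def by simp
  define c where "c = \<bar>poly q x\<bar> / 2"
  have "0 < c" "c < \<bar>poly q x\<bar>"
    using \<open>poly q x \<noteq> 0\<close> unfolding c_def by simp_all
  moreover have "((\<lambda>y. \<bar>poly q y\<bar>) \<longlongrightarrow> \<bar>poly q x\<bar>) (at x)"
    by (intro tendsto_intros)
  ultimately have "eventually (\<lambda>y. c < \<bar>poly q y\<bar>) (at x)"
    using order_tendstoD(1) by blast
  then obtain d where "0 < d" and d: "\<And>y. y \<noteq> x \<Longrightarrow> dist y x < d \<Longrightarrow> c < \<bar>poly q y\<bar>"
    unfolding eventually_at by blast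
  define \<delta> where "\<delta> = min 1 (d / 2)"
  have "c * \<bar>y - x\<bar> ^ m \<le> \<bar>poly p y\<bar>" if "\<bar>y - x\<bar> \<le> \<delta>" for y
  proof -
    have "c \<le> \<bar>poly q y\<bar>"
      using d[of y] that \<open>0 < d\<close> \<open>c < \<bar>poly q x\<bar>\<close>
      by (cases "y = x") (auto simp: dist_real_def \<delta>_def)
    then show ?thesis
      unfolding pq by (simp add: abs_mult power_abs mult_right_mono mult.commute)
  qed
  moreover have "0 < \<delta>" "\<delta> \<le> 1"
    using \<open>0 < d\<close> unfolding \<delta>_def by simp_all
  ultimately show ?thesis
    using that \<open>0 < m\<close> \<open>0 < c\<close> by blast
qed

lemma poly_upper_bound_near_root:
  fixes p :: "real poly"
  assumes "poly p x = 0"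
  obtains C where "0 \<le> C" "\<And>y. \<bar>y - x\<bar> \<le> 1 \<Longrightarrow> \<bar>poly p y\<bar> \<le> C * \<bar>y - x\<bar>"
proof -
  obtain r where pr: "p = [:- x, 1:] * r"
    using assms by (auto simp: poly_eq_0_iff_dvd elim: dvdE)
  obtain M where M: "\<And>y. x - 1 \<le> y \<Longrightarrow> y \<le> x + 1 \<Longrightarrow> \<bar>poly r y\<bar> \<le> M"
    using isCont_bounded[of "x - 1" "x + 1" "\<lambda>y. \<bar>poly r y\<bar>"] by auto
  have "\<bar>poly p y\<bar> \<le> max M 0 * \<bar>y - x\<bar>" if "\<bar>y - x\<bar> \<le> 1" for y
  proof -
    have "\<bar>poly r y\<bar> \<le> max M 0"
      using M[of y] that by (simp add: abs_le_iff)
    moreover have "poly p y = (y - x) * poly r y"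
      unfolding pr by (simp add: algebra_simps)
    ultimately show ?thesis
      by (metis abs_ge_zero abs_mult mult.commute mult_left_mono)
  qed
  then show ?thesis
    using that[of "max M 0"] by simp
qed

lemma coeff_perturbation_bound:
  fixes a b :: "nat \<Rightarrow> real"
  assumes "\<And>i. i \<le> k \<Longrightarrow> \<bar>b i - a i\<bar> \<le> \<epsilon>" "\<bar>y\<bar> \<le> B" "1 \<le> B"
  shows "\<bar>(\<Sum>i\<le>k. b i * y ^ (k - i)) - (\<Sum>i\<le>k. a i * y ^ (k - i))\<bar> \<le> (real k + 1) * B ^ k * \<epsilon>"
proof -
  have "0 \<le> \<epsilon>"
    using order_trans[OF abs_ge_zero assms(1)[of 0]] by simp
  have "\<bar>(\<Sum>i\<le>k. b i * y ^ (k - i)) - (\<Sum>i\<le>k. a i * y ^ (k - i))\<bar>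
      = \<bar>\<Sum>i\<le>k. (b i - a i) * y ^ (k - i)\<bar>"
    by (simp add: sum_subtractf left_diff_distrib)
  also have "\<dots> \<le> (\<Sum>i\<le>k. \<bar>(b i - a i) * y ^ (k - i)\<bar>)"
    by (rule sum_abs)
  also have "\<dots> \<le> (\<Sum>i\<le>k. \<epsilon> * B ^ k)"
  proof (rule sum_mono)
    fix i assume "i \<in> {..k}"
    have "\<bar>y\<bar> ^ (k - i) \<le> B ^ (k - i)"
      using assms(2) by (simp add: power_mono)
    also have "\<dots> \<le> B ^ k"
      using assms(3) by (simp add: power_increasing)
    finally show "\<bar>(b i - a i) * y ^ (k - i)\<bar> \<le> \<epsilon> * B ^ k"
      unfolding abs_mult power_abs using assms(1) \<open>i \<in> {..k}\<close> \<open>0 \<le> \<epsilon>\<close> by (intro mult_mono) auto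
  qed
  finally show ?thesis
    by (simp add: algebra_simps)
qed

lemma sum_divide_common_denominator:
  fixes a d :: "nat \<Rightarrow> 'a::field" and w N :: 'a
  assumes "\<And>i. i \<le> k \<Longrightarrow> d i \<noteq> 0" "N \<noteq> 0"
  shows "(\<Sum>i\<le>k. a i / d i * (w / N) ^ (k - i)) =
    (\<Sum>i\<le>k. a i * (\<Prod>l\<in>{..k} - {i}. d l) * w ^ (k - i) * N ^ i) / ((\<Prod>l\<le>k. d l) * N ^ k)"
  unfolding sum_divide_distrib
proof (rule sum.cong[OF refl])
  fix i assume "i \<in> {..k}"
  define Q where "Q = (\<Prod>l\<in>{..k} - {i}. d l)"
  have "(\<Prod>l\<le>k. d l) = d i * Q" "N ^ k = N ^ (k - i) * N ^ i"
    using \<open>i \<in> {..k}\<close> unfolding Q_def by (simp_all add: prod.remove flip: power_add)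
  moreover have "Q \<noteq> 0" "d i \<noteq> 0"
    using assms(1) \<open>i \<in> {..k}\<close> unfolding Q_def by auto
  ultimately show "a i / d i * (w / N) ^ (k - i) =
      a i * Q * w ^ (k - i) * N ^ i / ((\<Prod>l\<le>k. d l) * N ^ k)"
    using assms(2) by (simp add: power_divide)
qed

lemma abs_quotient_le_inverse_iff:
  fixes Z W K :: int
  assumes "0 < W" "0 < K"
  shows "\<bar>real_of_int Z / real_of_int W\<bar> \<le> 1 / real_of_int K \<longleftrightarrow> (Z * K)\<^sup>2 - W\<^sup>2 \<le> 0"
proof -
  have "(Z * K)\<^sup>2 - W\<^sup>2 \<le> 0 \<longleftrightarrow> \<bar>Z\<bar> * K \<le> W"
    using assms by (simp add: abs_le_square_iff[symmetric] abs_mult)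
  also have "\<dots> \<longleftrightarrow> \<bar>real_of_int Z\<bar> * real_of_int K \<le> real_of_int W"
    by (metis of_int_abs of_int_le_iff of_int_mult)
  also have "\<dots> \<longleftrightarrow> \<bar>real_of_int Z / real_of_int W\<bar> \<le> 1 / real_of_int K"
    using assms by (simp add: abs_divide divide_simps)
  finally show ?thesis ..
qed

section \<open>Grid search\<close>

text \<open>For j = 0, ..., s these points divide the cell of length 1/D containing x into s equal parts.\<close>

definition grid_point :: "real \<Rightarrow> nat \<Rightarrow> nat \<Rightarrow> nat \<Rightarrow> real" where
  "grid_point x D s j = (of_int \<lfloor>x * real D\<rfloor> * real s + real j) / (real D * real s)"

lemma grid_point_dist:
  assumes "0 < D" "0 < s" "j \<le> s"
  shows "\<bar>grid_point x D s j - x\<bar> \<le> 1 / D"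
proof -
  define u where "u = \<lfloor>x * D\<rfloor>"
  have "of_int u \<le> x * D" "x * D \<le> of_int u + 1"
    unfolding u_def by linarith+
  then have "of_int u * s \<le> x * D * s" "x * D * s \<le> (of_int u + 1) * s"
    by (simp_all add: mult_right_mono)
  then have "of_int u * s \<le> x * D * s" "x * D * s \<le> of_int u * s + s"
    by (simp_all add: distrib_right)
  then have "\<bar>of_int u * s + j - x * D * s\<bar> \<le> s"
    using assms(3) by (simp add: abs_le_iff)
  moreover have "grid_point x D s j - x = (of_int u * s + j - x * D * s) / (real D * real s)"
    using assms unfolding grid_point_def u_def by (simp add: field_simps)
  ultimately have "\<bar>grid_point x D s j - x\<bar> \<le> s / (real D * real s)"
    using divide_right_mono[of _ "real s" "real D * real s"] by (simp only: abs_divide abs_of_nonneg of_nat_0_le_iff mult_nonneg_nonneg)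
  then show ?thesis
    using assms by simp
qed

lemma grid_point_nearest:
  assumes "0 < D" "0 < s"
  obtains j where "j \<le> s" "\<bar>grid_point x D s j - x\<bar> \<le> 1 / (real D * real s)"
proof -
  define u where "u = \<lfloor>x * D\<rfloor>"
  define v where "v = \<lfloor>x * D * s\<rfloor>"
  have "of_int u \<le> x * D" "x * D < of_int u + 1"
    unfolding u_def by linarith+
  then have "of_int u * s \<le> x * D * s" "x * D * s < (of_int u + 1) * s"
    using assms(2) by (auto intro: mult_right_mono mult_strict_right_mono)
  then have "of_int (u * s) \<le> x * D * s" "x * D * s < of_int (u * s + s)"
    by (simp_all add: distrib_right)
  then have "u * s \<le> v" "v < u * s + s"
    unfolding v_def by (simp_all only: le_floor_iff floor_less_iff)
  define j where "j = nat (v - u * s)"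
  have "j \<le> s" "int j = v - u * s"
    using \<open>u * s \<le> v\<close> \<open>v < u * s + s\<close> unfolding j_def by simp_all
  then have "of_int u * real s + real j = of_int v"
    using arg_cong[OF \<open>int j = v - u * s\<close>, of real_of_int] by simp
  then have "grid_point x D s j - x = (of_int v - x * D * s) / (real D * real s)"
    using assms unfolding grid_point_def u_def[symmetric] by (simp add: field_simps)
  moreover have "\<bar>of_int v - x * D * s\<bar> \<le> 1"
    unfolding v_def by linarith
  ultimately have "\<bar>grid_point x D s j - x\<bar> \<le> 1 / (real D * real s)"
    using divide_right_mono[of _ 1 "real D * real s"] by (simp only: abs_divide abs_of_nonneg of_nat_0_le_iff mult_nonneg_nonneg)
  with \<open>j \<le> s\<close> show ?thesis
    by (rule that)
qed

lemma Least_bounded_search: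
  fixes P :: "nat \<Rightarrow> bool"
  assumes "P j" "j \<le> s"
  shows "P (LEAST i. P i \<or> i = s)" "(LEAST i. P i \<or> i = s) \<le> s"
proof -
  have "(LEAST i. P i \<or> i = s) \<le> j"
    by (rule Least_le) (simp add: assms(1))
  moreover have "P (LEAST i. P i \<or> i = s) \<or> (LEAST i. P i \<or> i = s) = s"
    by (rule LeastI[of _ s]) simp
  ultimately show "P (LEAST i. P i \<or> i = s)"
    using assms by (metis le_antisym)
  show "(LEAST i. P i \<or> i = s) \<le> s"
    by (rule Least_le) simp
qed

lemma grid_search_near_root:
  fixes P Q :: "real \<Rightarrow> real"
  assumes lower: "\<And>y. \<bar>y - x\<bar> \<le> \<delta> \<Longrightarrow> c * \<bar>y - x\<bar> ^ m \<le> \<bar>P y\<bar>"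
    and upper: "\<And>y. \<bar>y - x\<bar> \<le> \<delta> \<Longrightarrow> \<bar>P y\<bar> \<le> C * \<bar>y - x\<bar>"
    and approx: "\<And>y. \<bar>y - x\<bar> \<le> \<delta> \<Longrightarrow> \<bar>Q y - P y\<bar> \<le> 1 / (2 * K)"
    and "0 < m" "0 < c" "0 \<le> C" "0 < K" "0 \<le> \<epsilon>"
    and "0 < D" "1 / real D \<le> \<delta>" "0 < s"
    and "C / real s \<le> 1 / (2 * K)" "2 / K \<le> c * \<epsilon> ^ m"
  shows "\<bar>grid_point x D s (LEAST j. \<bar>Q (grid_point x D s j)\<bar> \<le> 1 / K \<or> j = s) - x\<bar> \<le> \<epsilon>"
proof -
  let ?y = "grid_point x D s"
  define L where "L = (LEAST j. \<bar>Q (?y j)\<bar> \<le> 1 / K \<or> j = s)"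
  obtain j where "j \<le> s" and j: "\<bar>?y j - x\<bar> \<le> 1 / (real D * real s)"
    using grid_point_nearest[OF \<open>0 < D\<close> \<open>0 < s\<close>] .
  have "1 / (real D * real s) \<le> 1 / real D" "1 / (real D * real s) \<le> 1 / real s"
    using \<open>0 < D\<close> \<open>0 < s\<close> by (simp_all add: divide_simps)
  then have "\<bar>?y j - x\<bar> \<le> \<delta>" "\<bar>?y j - x\<bar> \<le> 1 / real s"
    using j \<open>1 / real D \<le> \<delta>\<close> by linarith+
  have "\<bar>P (?y j)\<bar> \<le> C * (1 / real s)"
    using upper[OF \<open>\<bar>?y j - x\<bar> \<le> \<delta>\<close>] mult_left_mono[OF \<open>\<bar>?y j - x\<bar> \<le> 1 / real s\<close> \<open>0 \<le> C\<close>]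
    by linarith
  then have "\<bar>Q (?y j)\<bar> \<le> 1 / K"
    using approx[OF \<open>\<bar>?y j - x\<bar> \<le> \<delta>\<close>] \<open>C / real s \<le> 1 / (2 * K)\<close> by simp
  then have "\<bar>Q (?y L)\<bar> \<le> 1 / K" "L \<le> s"
    unfolding L_def using Least_bounded_search[of "\<lambda>i. \<bar>Q (?y i)\<bar> \<le> 1 / K", OF _ \<open>j \<le> s\<close>] by simp_all
  have "\<bar>?y L - x\<bar> \<le> \<delta>"
    using grid_point_dist[OF \<open>0 < D\<close> \<open>0 < s\<close> \<open>L \<le> s\<close>, of x] \<open>1 / real D \<le> \<delta>\<close> by linarith
  have "1 / (2 * K) \<le> 1 / K" "2 / K = 1 / K + 1 / K"
    using \<open>0 < K\<close> by (simp_all add: field_simps)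
  then have "\<bar>P (?y L)\<bar> \<le> 2 / K"
    using approx[OF \<open>\<bar>?y L - x\<bar> \<le> \<delta>\<close>] \<open>\<bar>Q (?y L)\<bar> \<le> 1 / K\<close> by arith
  then have "c * \<bar>?y L - x\<bar> ^ m \<le> c * \<epsilon> ^ m"
    using lower[OF \<open>\<bar>?y L - x\<bar> \<le> \<delta>\<close>] \<open>2 / K \<le> c * \<epsilon> ^ m\<close> by linarith
  then show ?thesis
    unfolding L_def[symmetric] using \<open>0 < c\<close> \<open>0 < m\<close> \<open>0 \<le> \<epsilon>\<close> by simp
qed

lemma grid_search_perturbed_poly:
  fixes \<alpha> \<beta> :: "nat \<Rightarrow> real"
  assumes lower: "\<And>y. \<bar>y - x\<bar> \<le> \<delta> \<Longrightarrow> c * \<bar>y - x\<bar> ^ m \<le> \<bar>\<Sum>i\<le>k. \<alpha> i * y ^ (k - i)\<bar>"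
    and upper: "\<And>y. \<bar>y - x\<bar> \<le> \<delta> \<Longrightarrow> \<bar>\<Sum>i\<le>k. \<alpha> i * y ^ (k - i)\<bar> \<le> C * \<bar>y - x\<bar>"
    and coeffs: "\<And>i. i \<le> k \<Longrightarrow> \<bar>\<beta> i - \<alpha> i\<bar> \<le> \<eta>"
    and "(real k + 1) * (\<bar>x\<bar> + 1) ^ k * \<eta> \<le> 1 / (2 * K)" "\<delta> \<le> 1"
    and "0 < m" "0 < c" "0 \<le> C" "0 < K" "0 \<le> \<epsilon>"
    and "0 < D" "1 / real D \<le> \<delta>" "0 < s"
    and "C / real s \<le> 1 / (2 * K)" "2 / K \<le> c * \<epsilon> ^ m"
  shows "\<bar>grid_point x D s (LEAST j. \<bar>\<Sum>i\<le>k. \<beta> i * grid_point x D s j ^ (k - i)\<bar> \<le> 1 / K \<or> j = s) - x\<bar>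
    \<le> \<epsilon>"
proof (rule grid_search_near_root[OF lower upper])
  fix y
  assume "\<bar>y - x\<bar> \<le> \<delta>"
  then have "\<bar>y\<bar> \<le> \<bar>x\<bar> + 1"
    using \<open>\<delta> \<le> 1\<close> by linarith
  then have "\<bar>(\<Sum>i\<le>k. \<beta> i * y ^ (k - i)) - (\<Sum>i\<le>k. \<alpha> i * y ^ (k - i))\<bar>
      \<le> (real k + 1) * (\<bar>x\<bar> + 1) ^ k * \<eta>"
    using coeffs by (intro coeff_perturbation_bound) auto
  then show "\<bar>(\<Sum>i\<le>k. \<beta> i * y ^ (k - i)) - (\<Sum>i\<le>k. \<alpha> i * y ^ (k - i))\<bar> \<le> 1 / (2 * K)"
    using assms(4) by linarith
qed (use assms in auto)

lemma grid_parameters: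
  fixes c C E :: real
  assumes "0 < c" "0 \<le> C" "0 \<le> E"
  obtains R L :: nat where "0 < R" "0 < L"
    "\<And>w. 1 \<le> w \<Longrightarrow> C / (real L * w) \<le> 1 / (2 * (real R * w))"
    "\<And>w. 1 \<le> w \<Longrightarrow> E / (real L * w + 1) \<le> 1 / (2 * (real R * w))"
    "\<And>w. 0 < w \<Longrightarrow> 2 / (real R * w) \<le> c / w"
proof -
  define R where "R = nat \<lceil>2 / c\<rceil>"
  define L where "L = nat \<lceil>2 * (C + E) * R\<rceil> + 1"
  have "2 / c \<le> R" "2 * (C + E) * R \<le> L"
    unfolding R_def L_def by (simp_all add: real_nat_ceiling_ge) linarith
  moreover have "0 < 2 / c"
    using assms(1) by simp
  ultimately have "0 < R" "0 < L"
    unfolding L_def by linarith+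
  have "0 \<le> 2 * C * R" "0 \<le> 2 * E * R" "2 * (C + E) * R = 2 * C * R + 2 * E * R"
    using assms(2,3) by (simp_all add: algebra_simps)
  then have "2 * C * R \<le> L" "2 * E * R \<le> L"
    using \<open>2 * (C + E) * R \<le> L\<close> by linarith+
  have small: "X / (real L * w) \<le> 1 / (2 * (real R * w))" if "2 * X * R \<le> L" "1 \<le> w" for X w :: real
  proof -
    have "(2 * X * R) * w \<le> real L * w"
      using that by (intro mult_right_mono) auto
    then show ?thesis
      using that(2) \<open>0 < L\<close> \<open>0 < R\<close> by (simp add: divide_simps ac_simps)
  qed
  have "E / (real L * w + 1) \<le> 1 / (2 * (real R * w))" if "1 \<le> w" for w
  proof -
    have "0 < real L * w"
      using that \<open>0 < L\<close> by simp
    then have "E / (real L * w + 1) \<le> E / (real L * w)"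
      using assms(3) by (intro divide_left_mono) auto
    then show ?thesis
      using small[OF \<open>2 * E * R \<le> L\<close> that] by linarith
  qed
  moreover have "2 / (real R * w) \<le> c / w" if "0 < w" for w
    using \<open>2 / c \<le> R\<close> that assms(1) \<open>0 < R\<close> by (simp add: divide_simps mult.commute)
  ultimately show ?thesis
    using small[OF \<open>2 * C * R \<le> L\<close>] \<open>0 < R\<close> \<open>0 < L\<close> by (intro that)
qed

section \<open>Closure properties of the function class\<close>

text \<open>Unlike F itself, whose subtraction is truncated, differences of two members of F are closed
  under all ring operations, which is what clearing denominators requires.\<close>

definition fmem_int :: "fclass \<Rightarrow> nat \<Rightarrow> (nat list \<Rightarrow> int) \<Rightarrow> bool" where
  "fmem_int F n z \<longleftrightarrow>
     (\<exists>a b. fmem F n a \<and> fmem F n b \<and> (\<forall>xs. length xs = n \<longrightarrow> z xs = int (a xs) - int (b xs)))"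

lemma F_computable_iff_fmem_int:
  "F_computable F \<alpha> \<longleftrightarrow> (\<exists>a d. fmem_int F 1 a \<and> fmem F 1 d \<and>
     (\<forall>n. \<bar>real_of_int (a [n]) / (real (d [n]) + 1) - \<alpha>\<bar> \<le> 1 / (real n + 1)))"
    (is "_ \<longleftrightarrow> (\<exists>a d. ?repr a d)")
proof
  assume "F_computable F \<alpha>"
  then obtain f g d where "fmem F 1 f" "fmem F 1 g" "fmem F 1 d"
    and "\<forall>n. \<bar>(real (f [n]) - real (g [n])) / (real (d [n]) + 1) - \<alpha>\<bar> \<le> 1 / (real n + 1)"
    unfolding F_computable_def F_sequence_def by (auto simp: of_rat_divide of_rat_diff of_rat_add)
  then have "?repr (\<lambda>xs. int (f xs) - int (g xs)) d"
    unfolding fmem_int_def by auto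
  then show "\<exists>a d. ?repr a d" by blast
next
  assume "\<exists>a d. ?repr a d"
  then obtain f g d where "fmem F 1 f" "fmem F 1 g" "fmem F 1 d"
    and approx: "\<And>n. \<bar>(real (f [n]) - real (g [n])) / (real (d [n]) + 1) - \<alpha>\<bar> \<le> 1 / (real n + 1)"
    unfolding fmem_int_def by auto
  define A :: "nat \<Rightarrow> rat" where "A n = (of_nat (f [n]) - of_nat (g [n])) / (of_nat (d [n]) + 1)" for n
  have "F_sequence F A"
    unfolding F_sequence_def A_def using \<open>fmem F 1 f\<close> \<open>fmem F 1 g\<close> \<open>fmem F 1 d\<close> by blast
  moreover have "\<bar>real_of_rat (A n) - \<alpha>\<bar> \<le> 1 / (real n + 1)" for n
    using approx by (simp add: A_def of_rat_divide of_rat_diff of_rat_add)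
  ultimately show "F_computable F \<alpha>"
    unfolding F_computable_def by blast
qed

context
  fixes F :: fclass
  assumes SC: "standard_conditions F"
begin

lemma fmem_proj: "i < n \<Longrightarrow> fmem F n (\<lambda>xs. xs ! i)"
  using SC unfolding standard_conditions_def by blast

lemma fmem_comp:
  "fmem F m f \<Longrightarrow> length gs = m \<Longrightarrow> (\<forall>g\<in>set gs. fmem F n g) \<Longrightarrow>
    fmem F n (\<lambda>xs. f (map (\<lambda>g. g xs) gs))"
  using SC unfolding standard_conditions_def by blast

lemma fmem_comp1: "fmem F 1 f \<Longrightarrow> fmem F n g \<Longrightarrow> fmem F n (\<lambda>xs. f [g xs])"
  using fmem_comp[of 1 f "[g]" n] by simp

lemma fmem_comp2:
  "fmem F 2 f \<Longrightarrow> fmem F n g \<Longrightarrow> fmem F n h \<Longrightarrow> fmem F n (\<lambda>xs. f [g xs, h xs])"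
  using fmem_comp[of 2 f "[g, h]" n] by simp

lemma fmem_basic:
  "fmem F 1 (\<lambda>xs. 0)" "fmem F 1 (\<lambda>xs. Suc (xs ! 0))"
  "fmem F 2 (\<lambda>xs. xs ! 0 + xs ! 1)" "fmem F 2 (\<lambda>xs. xs ! 0 * xs ! 1)"
  "fmem F 2 (\<lambda>xs. xs ! 0 - xs ! 1)"
  using SC unfolding standard_conditions_def by blast+

lemma fmem_add: "fmem F n f \<Longrightarrow> fmem F n g \<Longrightarrow> fmem F n (\<lambda>xs. f xs + g xs)"
  using fmem_comp2[OF fmem_basic(3)] by simp

lemma fmem_mult: "fmem F n f \<Longrightarrow> fmem F n g \<Longrightarrow> fmem F n (\<lambda>xs. f xs * g xs)"
  using fmem_comp2[OF fmem_basic(4)] by simp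

lemma fmem_diff: "fmem F n f \<Longrightarrow> fmem F n g \<Longrightarrow> fmem F n (\<lambda>xs. f xs - g xs)"
  using fmem_comp2[OF fmem_basic(5)] by simp

lemma fmem_Suc: "fmem F n f \<Longrightarrow> fmem F n (\<lambda>xs. Suc (f xs))"
  using fmem_comp1[OF fmem_basic(2)] by simp

lemma fmem_const: "0 < n \<Longrightarrow> fmem F n (\<lambda>xs. c)"
proof (induction c)
  case 0
  then show ?case
    using fmem_comp1[OF fmem_basic(1) fmem_proj[OF 0]] by simp
next
  case (Suc c)
  then show ?case using fmem_Suc by blast
qed

lemma fmem_power: "0 < n \<Longrightarrow> fmem F n f \<Longrightarrow> fmem F n (\<lambda>xs. f xs ^ e)"
  by (induction e) (auto intro: fmem_const fmem_mult)

lemma fmem_const_times_power: "0 < n \<Longrightarrow> fmem F n (\<lambda>xs. A * (xs ! 0 + 1) ^ m)"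
  by (intro fmem_mult fmem_const fmem_power fmem_add fmem_proj) auto

lemma fmem_intI:
  "fmem F n a \<Longrightarrow> fmem F n b \<Longrightarrow> (\<And>xs. length xs = n \<Longrightarrow> z xs = int (a xs) - int (b xs)) \<Longrightarrow>
    fmem_int F n z"
  unfolding fmem_int_def by blast

lemma fmem_intE:
  assumes "fmem_int F n z"
  obtains a b where "fmem F n a" "fmem F n b" "\<And>xs. length xs = n \<Longrightarrow> z xs = int (a xs) - int (b xs)"
  using assms unfolding fmem_int_def by blast

lemma fmem_int_of_nat: "0 < n \<Longrightarrow> fmem F n f \<Longrightarrow> fmem_int F n (\<lambda>xs. int (f xs))"
  by (rule fmem_intI[of n f "\<lambda>xs. 0"]) (auto intro: fmem_const)

lemma fmem_int_const: "0 < n \<Longrightarrow> fmem_int F n (\<lambda>xs. c)"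
  by (rule fmem_intI[of n "\<lambda>xs. nat c" "\<lambda>xs. nat (- c)"]) (auto intro: fmem_const)

lemma fmem_int_comp1:
  assumes "fmem_int F 1 z" "fmem F n g"
  shows "fmem_int F n (\<lambda>xs. z [g xs])"
proof -
  obtain a b where "fmem F 1 a" "fmem F 1 b" "\<And>xs. length xs = 1 \<Longrightarrow> z xs = int (a xs) - int (b xs)"
    using fmem_intE[OF assms(1)] by blast
  then show ?thesis
    by (intro fmem_intI[of n "\<lambda>xs. a [g xs]" "\<lambda>xs. b [g xs]"] fmem_comp1 assms(2)) auto
qed

lemma fmem_int_add:
  assumes "fmem_int F n f" "fmem_int F n g"
  shows "fmem_int F n (\<lambda>xs. f xs + g xs)"
proof -
  obtain a b where "fmem F n a" "fmem F n b" "\<And>xs. length xs = n \<Longrightarrow> f xs = int (a xs) - int (b xs)"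
    using fmem_intE[OF assms(1)] by blast
  moreover obtain a' b' where
    "fmem F n a'" "fmem F n b'" "\<And>xs. length xs = n \<Longrightarrow> g xs = int (a' xs) - int (b' xs)"
    using fmem_intE[OF assms(2)] by blast
  ultimately show ?thesis
    by (intro fmem_intI[of n "\<lambda>xs. a xs + a' xs" "\<lambda>xs. b xs + b' xs"] fmem_add) auto
qed

lemma fmem_int_diff:
  assumes "fmem_int F n f" "fmem_int F n g"
  shows "fmem_int F n (\<lambda>xs. f xs - g xs)"
proof -
  obtain a b where "fmem F n a" "fmem F n b" "\<And>xs. length xs = n \<Longrightarrow> f xs = int (a xs) - int (b xs)"
    using fmem_intE[OF assms(1)] by blast
  moreover obtain a' b' where
    "fmem F n a'" "fmem F n b'" "\<And>xs. length xs = n \<Longrightarrow> g xs = int (a' xs) - int (b' xs)"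
    using fmem_intE[OF assms(2)] by blast
  ultimately show ?thesis
    by (intro fmem_intI[of n "\<lambda>xs. a xs + b' xs" "\<lambda>xs. b xs + a' xs"] fmem_add) auto
qed

lemma fmem_int_mult:
  assumes "fmem_int F n f" "fmem_int F n g"
  shows "fmem_int F n (\<lambda>xs. f xs * g xs)"
proof -
  obtain a b where "fmem F n a" "fmem F n b"
    and f: "\<And>xs. length xs = n \<Longrightarrow> f xs = int (a xs) - int (b xs)"
    using fmem_intE[OF assms(1)] by blast
  moreover obtain a' b' where "fmem F n a'" "fmem F n b'"
    and g: "\<And>xs. length xs = n \<Longrightarrow> g xs = int (a' xs) - int (b' xs)"
    using fmem_intE[OF assms(2)] by blast
  ultimately show ?thesis
    by (intro fmem_intI[of n "\<lambda>xs. a xs * a' xs + b xs * b' xs" "\<lambda>xs. a xs * b' xs + b xs * a' xs"]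
        fmem_add fmem_mult) (simp_all add: f g algebra_simps)
qed

lemma fmem_int_power: "0 < n \<Longrightarrow> fmem_int F n f \<Longrightarrow> fmem_int F n (\<lambda>xs. f xs ^ e)"
  by (induction e) (simp_all add: fmem_int_const fmem_int_mult)

lemma fmem_int_sum:
  "finite S \<Longrightarrow> 0 < n \<Longrightarrow> (\<And>i. i \<in> S \<Longrightarrow> fmem_int F n (f i)) \<Longrightarrow>
    fmem_int F n (\<lambda>xs. \<Sum>i\<in>S. f i xs)"
  by (induction S rule: finite_induct) (simp_all add: fmem_int_const fmem_int_add)

lemma fmem_int_prod:
  "finite S \<Longrightarrow> 0 < n \<Longrightarrow> (\<And>i. i \<in> S \<Longrightarrow> fmem_int F n (f i)) \<Longrightarrow>
    fmem_int F n (\<lambda>xs. \<Prod>i\<in>S. f i xs)"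
  by (induction S rule: finite_induct) (simp_all add: fmem_int_const fmem_int_mult)

lemma fmem_int_nonpos_test:
  assumes "fmem_int F n z"
  obtains t where "fmem F n t" "\<And>xs. length xs = n \<Longrightarrow> t xs = 0 \<longleftrightarrow> z xs \<le> 0"
proof -
  obtain a b where "fmem F n a" "fmem F n b" "\<And>xs. length xs = n \<Longrightarrow> z xs = int (a xs) - int (b xs)"
    using fmem_intE[OF assms] by blast
  then show ?thesis
    using that[of "\<lambda>xs. a xs - b xs"] fmem_diff by simp
qed

lemma F_computable_intI:
  assumes "fmem_int F 1 a" "fmem F 1 d" and pos: "\<And>n. 0 < d [n]"
    and approx: "\<And>n. \<bar>real_of_int (a [n]) / real (d [n]) - \<alpha>\<bar> \<le> 1 / (real n + 1)"
  shows "F_computable F \<alpha>"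
  unfolding F_computable_iff_fmem_int
proof (intro exI conjI allI)
  show "fmem F 1 (\<lambda>xs. d xs - 1)"
    by (intro fmem_diff fmem_const assms(2)) simp
  fix n
  have "real (d [n] - 1) + 1 = real (d [n])"
    using pos[of n] by (simp add: of_nat_diff)
  then show "\<bar>real_of_int (a [n]) / (real (d [n] - 1) + 1) - \<alpha>\<bar> \<le> 1 / (real n + 1)"
    using approx by simp
qed fact

section \<open>Computability of the root\<close>

lemma fmem_poly_value_test:
  assumes "0 < n"
    and a: "\<And>i. i \<le> k \<Longrightarrow> fmem_int F n (a i)"
    and b: "\<And>i. i \<le> k \<Longrightarrow> fmem F n (b i)" "\<And>i xs. i \<le> k \<Longrightarrow> length xs = n \<Longrightarrow> 0 < b i xs"
    and w: "fmem_int F n w"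
    and N: "fmem F n N" "\<And>xs. length xs = n \<Longrightarrow> 0 < N xs"
    and K: "fmem F n K" "\<And>xs. length xs = n \<Longrightarrow> 0 < K xs"
  obtains t where "fmem F n t"
    "\<And>xs. length xs = n \<Longrightarrow> t xs = 0 \<longleftrightarrow>
       \<bar>\<Sum>i\<le>k. real_of_int (a i xs) / real (b i xs) * (real_of_int (w xs) / real (N xs)) ^ (k - i)\<bar>
         \<le> 1 / real (K xs)"
proof -
  define Z where "Z xs = (\<Sum>i\<le>k. a i xs * (\<Prod>l\<in>{..k} - {i}. int (b l xs)) * w xs ^ (k - i) * int (N xs) ^ i)" for xs
  define W where "W xs = (\<Prod>l\<le>k. int (b l xs)) * int (N xs) ^ k" for xs
  have "fmem_int F n (\<lambda>xs. (Z xs * int (K xs))\<^sup>2 - (W xs)\<^sup>2)"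
    unfolding Z_def W_def using \<open>0 < n\<close>
    by (intro fmem_int_diff fmem_int_power fmem_int_mult fmem_int_sum fmem_int_prod
        fmem_int_of_nat a b w N K) auto
  then obtain t where "fmem F n t"
    and t: "\<And>xs. length xs = n \<Longrightarrow> t xs = 0 \<longleftrightarrow> (Z xs * int (K xs))\<^sup>2 - (W xs)\<^sup>2 \<le> 0"
    using fmem_int_nonpos_test by blast
  have "t xs = 0 \<longleftrightarrow>
       \<bar>\<Sum>i\<le>k. real_of_int (a i xs) / real (b i xs) * (real_of_int (w xs) / real (N xs)) ^ (k - i)\<bar>
         \<le> 1 / real (K xs)" if "length xs = n" for xs
  proof -
    have "0 < W xs"
      unfolding W_def using b(2) N(2) that by (auto intro!: prod_pos mult_pos_pos zero_less_power)
    moreover have "(\<Sum>i\<le>k. real_of_int (a i xs) / real (b i xs) * (real_of_int (w xs) / real (N xs)) ^ (k - i))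
        = real_of_int (Z xs) / real_of_int (W xs)"
      unfolding Z_def W_def using b(2) N(2) that
      by (subst sum_divide_common_denominator) (auto simp: less_imp_neq[symmetric])
    ultimately show ?thesis
      using t[OF that] abs_quotient_le_inverse_iff[of "W xs" "int (K xs)" "Z xs"] K(2)[OF that] by simp
  qed
  with \<open>fmem F n t\<close> show ?thesis
    by (rule that)
qed

lemma fmem_grid_test:
  assumes a: "\<And>i. i \<le> k \<Longrightarrow> fmem_int F 1 (a i)" and d: "\<And>i. i \<le> k \<Longrightarrow> fmem F 1 (d i)"
    and s: "fmem F 1 (\<lambda>xs. s (xs ! 0))" "\<And>n. 0 < s n"
    and K: "fmem F 1 (\<lambda>xs. K (xs ! 0))" "\<And>n. 0 < K n"
    and "0 < D"
  obtains t where "fmem F 2 t" "\<And>n j. t [n, j] = 0 \<longleftrightarrow>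
    \<bar>\<Sum>i\<le>k. real_of_int (a i [s n]) / (real (d i [s n]) + 1) * grid_point x D (s n) j ^ (k - i)\<bar>
      \<le> 1 / real (K n)"
proof -
  have first: "fmem F 2 (\<lambda>xs. f (xs ! 0))" if "fmem F 1 (\<lambda>xs. f (xs ! 0))" for f
    using fmem_comp1[OF that fmem_proj[of 0 2]] by simp
  obtain t where "fmem F 2 t" and t: "\<And>xs. length xs = 2 \<Longrightarrow> t xs = 0 \<longleftrightarrow>
       \<bar>\<Sum>i\<le>k. real_of_int (a i [s (xs ! 0)]) / real (d i [s (xs ! 0)] + 1) *
         (real_of_int (\<lfloor>x * real D\<rfloor> * int (s (xs ! 0)) + int (xs ! 1)) / real (D * s (xs ! 0))) ^ (k - i)\<bar>
         \<le> 1 / real (K (xs ! 0))"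
  proof (rule fmem_poly_value_test)
    show "fmem_int F 2 (\<lambda>xs. a i [s (xs ! 0)])" if "i \<le> k" for i
      by (rule fmem_int_comp1[OF a[OF that] first[OF s(1)]])
    show "fmem F 2 (\<lambda>xs. d i [s (xs ! 0)] + 1)" if "i \<le> k" for i
      by (rule fmem_add[OF fmem_comp1[OF d[OF that] first[OF s(1)]] fmem_const]) simp
    have "fmem_int F 2 (\<lambda>xs. int (s (xs ! 0)))" "fmem_int F 2 (\<lambda>xs. int (xs ! 1))"
      using fmem_int_of_nat[OF _ first[OF s(1)]] fmem_int_of_nat[OF _ fmem_proj[of 1 2]]
      by simp_all
    then show "fmem_int F 2 (\<lambda>xs. \<lfloor>x * real D\<rfloor> * int (s (xs ! 0)) + int (xs ! 1))"
      using fmem_int_const by (simp add: fmem_int_add fmem_int_mult)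
    show "fmem F 2 (\<lambda>xs. D * s (xs ! 0))"
      by (rule fmem_mult[OF fmem_const first[OF s(1)]]) simp
    show "fmem F 2 (\<lambda>xs. K (xs ! 0))"
      by (rule first[OF K(1)])
    show "0 < D * s (xs ! 0)" "0 < K (xs ! 0)" for xs :: "nat list"
      using \<open>0 < D\<close> s(2) K(2) by simp_all
  qed simp_all
  have "t [n, j] = 0 \<longleftrightarrow>
    \<bar>\<Sum>i\<le>k. real_of_int (a i [s n]) / (real (d i [s n]) + 1) * grid_point x D (s n) j ^ (k - i)\<bar>
      \<le> 1 / real (K n)" for n j
    using t[of "[n, j]"] unfolding grid_point_def by (simp add: add.commute)
  with \<open>fmem F 2 t\<close> show ?thesis
    by (rule that)
qed

lemma F_computable_by_grid_search:
  assumes "closed_minimizer F" "fmem F 2 t"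
    and s: "fmem F 1 (\<lambda>xs. s (xs ! 0))" "\<And>n. 0 < s n"
    and "0 < D"
    and close: "\<And>n. \<bar>grid_point x D (s n) (LEAST j. t [n, j] = 0 \<or> j = s n) - x\<bar> \<le> 1 / (real n + 1)"
  shows "F_computable F x"
proof -
  have "fmem F 2 (minimizer t)"
    using assms(1,2) unfolding closed_minimizer_def by (metis Suc_1)
  from fmem_comp2[OF this fmem_proj[of 0 1] s(1)]
  have search: "fmem F 1 (\<lambda>xs. minimizer t [xs ! 0, s (xs ! 0)])"
    by simp
  have "minimizer t [n, s n] = (LEAST j. t [n, j] = 0 \<or> j = s n)" for n
    unfolding minimizer_def by simp
  then have close': "\<bar>real_of_int (\<lfloor>x * real D\<rfloor> * int (s ([n] ! 0)) + int (minimizer t [[n] ! 0, s ([n] ! 0)]))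
      / real (D * s ([n] ! 0)) - x\<bar> \<le> 1 / (real n + 1)" for n
    using close[of n] unfolding grid_point_def by simp
  have "fmem_int F 1 (\<lambda>xs. \<lfloor>x * real D\<rfloor> * int (s (xs ! 0)) + int (minimizer t [xs ! 0, s (xs ! 0)]))"
    by (intro fmem_int_add fmem_int_mult fmem_int_const fmem_int_of_nat search s) simp_all
  moreover have "fmem F 1 (\<lambda>xs. D * s (xs ! 0))"
    by (intro fmem_mult fmem_const s) simp
  moreover have "0 < D * s ([n] ! 0)" for n
    using \<open>0 < D\<close> s(2) by simp
  ultimately show ?thesis
    by (rule F_computable_intI[OF _ _ _ close'])
qed

lemma F_computable_root_of_local_bounds:
  fixes \<alpha> :: "nat \<Rightarrow> real" and p :: "real poly"
  assumes "closed_minimizer F"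
    and a: "\<And>i. i \<le> k \<Longrightarrow> fmem_int F 1 (a i)" and d: "\<And>i. i \<le> k \<Longrightarrow> fmem F 1 (d i)"
    and coeffs: "\<And>i n. i \<le> k \<Longrightarrow>
      \<bar>real_of_int (a i [n]) / (real (d i [n]) + 1) - \<alpha> i\<bar> \<le> 1 / (real n + 1)"
    and p: "\<And>y. poly p y = (\<Sum>i\<le>k. \<alpha> i * y ^ (k - i))"
    and lower: "\<And>y. \<bar>y - x\<bar> \<le> \<delta> \<Longrightarrow> c * \<bar>y - x\<bar> ^ m \<le> \<bar>poly p y\<bar>"
    and upper: "\<And>y. \<bar>y - x\<bar> \<le> 1 \<Longrightarrow> \<bar>poly p y\<bar> \<le> C * \<bar>y - x\<bar>"
    and "0 < m" "0 < c" "0 \<le> C" "0 < \<delta>" "\<delta> \<le> 1"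
  shows "F_computable F x"
proof -
  obtain D :: nat where "0 < D" "1 / real D \<le> \<delta>"
    using ex_inverse_of_nat_less[OF \<open>0 < \<delta>\<close>] by (auto simp: inverse_eq_divide)
  obtain R L where "0 < R" "0 < L"
    and C_small: "\<And>w. 1 \<le> w \<Longrightarrow> C / (real L * w) \<le> 1 / (2 * (real R * w))"
    and E_small: "\<And>w. 1 \<le> w \<Longrightarrow>
      (real k + 1) * (\<bar>x\<bar> + 1) ^ k / (real L * w + 1) \<le> 1 / (2 * (real R * w))"
    and c_large: "\<And>w. 0 < w \<Longrightarrow> 2 / (real R * w) \<le> c / w"
    using grid_parameters[OF \<open>0 < c\<close> \<open>0 \<le> C\<close>, of "(real k + 1) * (\<bar>x\<bar> + 1) ^ k"] by auto
  define s where "s n = L * (n + 1) ^ m" for n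
  define K where "K n = R * (n + 1) ^ m" for n
  have s: "fmem F 1 (\<lambda>xs. s (xs ! 0))" "\<And>n. 0 < s n"
    unfolding s_def using fmem_const_times_power \<open>0 < L\<close> by simp_all
  have K: "fmem F 1 (\<lambda>xs. K (xs ! 0))" "\<And>n. 0 < K n"
    unfolding K_def using fmem_const_times_power \<open>0 < R\<close> by simp_all
  obtain t where "fmem F 2 t" and t: "\<And>n j. t [n, j] = 0 \<longleftrightarrow>
      \<bar>\<Sum>i\<le>k. real_of_int (a i [s n]) / (real (d i [s n]) + 1) * grid_point x D (s n) j ^ (k - i)\<bar>
        \<le> 1 / real (K n)"
    using fmem_grid_test[where k = k and a = a and d = d and x = x, OF a d s K \<open>0 < D\<close>] by blast
  have upper': "\<bar>\<Sum>i\<le>k. \<alpha> i * y ^ (k - i)\<bar> \<le> C * \<bar>y - x\<bar>" if "\<bar>y - x\<bar> \<le> \<delta>" for y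
    using upper[of y] that \<open>\<delta> \<le> 1\<close> unfolding p by simp
  show ?thesis
  proof (rule F_computable_by_grid_search[OF assms(1) \<open>fmem F 2 t\<close> s \<open>0 < D\<close>])
    fix n
    define w where "w = (real n + 1) ^ m"
    have "1 \<le> w"
      unfolding w_def by simp
    have sK: "real (s n) = real L * w" "real (K n) = real R * w"
      unfolding s_def K_def w_def by (simp_all add: add.commute)
    have E: "(real k + 1) * (\<bar>x\<bar> + 1) ^ k * (1 / (real (s n) + 1)) \<le> 1 / (2 * real (K n))"
      using E_small[OF \<open>1 \<le> w\<close>] unfolding sK by simp
    have C: "C / real (s n) \<le> 1 / (2 * real (K n))"
      using C_small[OF \<open>1 \<le> w\<close>] unfolding sK .
    have c: "2 / real (K n) \<le> c * (1 / (real n + 1)) ^ m"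
      using c_large[of w] \<open>1 \<le> w\<close> unfolding sK by (simp add: w_def power_divide)
    show "\<bar>grid_point x D (s n) (LEAST j. t [n, j] = 0 \<or> j = s n) - x\<bar> \<le> 1 / (real n + 1)"
      unfolding t
      by (rule grid_search_perturbed_poly[OF lower[unfolded p] upper' coeffs[of _ "s n"] E \<open>\<delta> \<le> 1\<close>
            \<open>0 < m\<close> \<open>0 < c\<close> \<open>0 \<le> C\<close> _ _ \<open>0 < D\<close> \<open>1 / real D \<le> \<delta>\<close> s(2) C c])
        (simp_all add: K(2))
  qed
qed

end

theorem mainTheorem13:
  fixes F :: fclass and k :: nat and \<alpha> :: "nat \<Rightarrow> real" and x :: real
  assumes "standard_conditions F"
    and "closed_minimizer F"
    and "\<alpha> 0 \<noteq> 0"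
    and "\<forall>i\<le>k. F_computable F (\<alpha> i)"
    and "(\<Sum>i\<le>k. \<alpha> i * x ^ (k - i)) = 0"
  shows "F_computable F x"
proof -
  obtain p :: "real poly" where "p \<noteq> 0" and p: "\<And>y. poly p y = (\<Sum>i\<le>k. \<alpha> i * y ^ (k - i))"
    using poly_descending_coeffs[where \<alpha> = \<alpha> and k = k, OF assms(3)] by blast
  have "poly p x = 0"
    using assms(5) p by simp
  obtain m c \<delta> where "0 < m" "0 < c" "0 < \<delta>" "\<delta> \<le> 1"
    and lower: "\<And>y. \<bar>y - x\<bar> \<le> \<delta> \<Longrightarrow> c * \<bar>y - x\<bar> ^ m \<le> \<bar>poly p y\<bar>"
    using poly_lower_bound_near_root[OF \<open>p \<noteq> 0\<close> \<open>poly p x = 0\<close>] by blast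
  obtain C where "0 \<le> C" and upper: "\<And>y. \<bar>y - x\<bar> \<le> 1 \<Longrightarrow> \<bar>poly p y\<bar> \<le> C * \<bar>y - x\<bar>"
    using poly_upper_bound_near_root[OF \<open>poly p x = 0\<close>] by blast
  have "\<forall>i\<le>k. \<exists>a d. fmem_int F 1 a \<and> fmem F 1 d \<and>
      (\<forall>n. \<bar>real_of_int (a [n]) / (real (d [n]) + 1) - \<alpha> i\<bar> \<le> 1 / (real n + 1))"
    using assms(4) by (simp add: F_computable_iff_fmem_int)
  then obtain a d where a: "\<And>i. i \<le> k \<Longrightarrow> fmem_int F 1 (a i)" and d: "\<And>i. i \<le> k \<Longrightarrow> fmem F 1 (d i)"
    and coeffs: "\<And>i n. i \<le> k \<Longrightarrow>
      \<bar>real_of_int (a i [n]) / (real (d i [n]) + 1) - \<alpha> i\<bar> \<le> 1 / (real n + 1)"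
    by metis
  show ?thesis
    by (rule F_computable_root_of_local_bounds[OF assms(1,2) a d coeffs p lower upper])
      (use \<open>0 < m\<close> \<open>0 < c\<close> \<open>0 \<le> C\<close> \<open>0 < \<delta>\<close> \<open>\<delta> \<le> 1\<close> in auto)
qed

end
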